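(* Let $G=(V,E)$ be a finite simple graph and let $C\subseteq V$. Let $x$ be an optimal solution of the integer program $$\text{minimize }\sum_{v\in V}x_v\ \text{ subject to }\ \sum_{v\in V}x_v\geq1,\quad x_u-x_v+\sum_{w\in N(u)\setminus\{v\}}x_w\geq0\ \ \forall v\in V,\ u\in N(v),\quad x_v=0\ \ \forall v\in C,\quad x\in\{0,1\}^V,$$ and let $F=\{v\in V\colon x_v=1\}$. Then $F$ is a fort of $G$ with $F\subseteq V\setminus\mathrm{cl}(C)$, and $F$ has minimum cardinality among all forts of $G$ contained in $V\setminus\mathrm{cl}(C)$.
   Context: $N(u)$ denotes the neighborhood of $u$. A fort of $G$ is a non-empty set $F\subseteq V$ such that no vertex $u\in V\setminus F$ has exactly one neighbor in $F$. The closure $\mathrm{cl}(C)$ is the set of filled vertices obtained by starting with the vertices of $C$ filled and repeatedly applying the standard color change rule (a filled vertex $u$ forces a non-filled vertex $v$ to become filled if $v$ is the only non-filled neighbor of $u$) until no more forces are possible. *)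

theory Defs
  imports Main
begin

definition simple_graph :: "'a set \<Rightarrow> ('a \<Rightarrow> 'a \<Rightarrow> bool) \<Rightarrow> bool" where
  "simple_graph V E \<longleftrightarrow> finite V \<and> (\<forall>u v. E u v \<longrightarrow> E v u)
     \<and> (\<forall>u. \<not> E u u) \<and> (\<forall>u v. E u v \<longrightarrow> u \<in> V \<and> v \<in> V)"

definition nbhd :: "'a set \<Rightarrow> ('a \<Rightarrow> 'a \<Rightarrow> bool) \<Rightarrow> 'a \<Rightarrow> 'a set" where
  "nbhd V E u = {w \<in> V. E u w}"

definition is_fort :: "'a set \<Rightarrow> ('a \<Rightarrow> 'a \<Rightarrow> bool) \<Rightarrow> 'a set \<Rightarrow> bool" where
  "is_fort V E F \<longleftrightarrow> F \<noteq> {} \<and> F \<subseteq> V \<and>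
     (\<forall>u \<in> V - F. card (nbhd V E u \<inter> F) \<noteq> 1)"

inductive_set zf_closure :: "'a set \<Rightarrow> ('a \<Rightarrow> 'a \<Rightarrow> bool) \<Rightarrow> 'a set \<Rightarrow> 'a set"
  for V E C where
  base: "v \<in> C \<Longrightarrow> v \<in> zf_closure V E C"
| force: "u \<in> zf_closure V E C \<Longrightarrow> v \<in> nbhd V E u \<Longrightarrow>
          (\<And>w. w \<in> nbhd V E u \<Longrightarrow> w \<noteq> v \<Longrightarrow> w \<in> zf_closure V E C) \<Longrightarrow> v \<in> zf_closure V E C"

definition ip_feasible :: "'a set \<Rightarrow> ('a \<Rightarrow> 'a \<Rightarrow> bool) \<Rightarrow> 'a set \<Rightarrow> ('a \<Rightarrow> int) \<Rightarrow> bool" where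
  "ip_feasible V E C x \<longleftrightarrow>
     (\<forall>v \<in> V. x v \<in> {0, 1}) \<and>
     (\<Sum>v\<in>V. x v) \<ge> 1 \<and>
     (\<forall>v \<in> V. \<forall>u \<in> nbhd V E v. x u - x v + (\<Sum>w\<in>nbhd V E u - {v}. x w) \<ge> 0) \<and>
     (\<forall>v \<in> C. x v = 0)"

definition ip_optimal :: "'a set \<Rightarrow> ('a \<Rightarrow> 'a \<Rightarrow> bool) \<Rightarrow> 'a set \<Rightarrow> ('a \<Rightarrow> int) \<Rightarrow> bool" where
  "ip_optimal V E C x \<longleftrightarrow> ip_feasible V E C x \<and>
     (\<forall>y. ip_feasible V E C y \<longrightarrow> (\<Sum>v\<in>V. x v) \<le> (\<Sum>v\<in>V. y v))"

end

theory Submission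
  imports Defs
begin

text \<open>The constraints of the integer program say exactly that the support of a 0/1 vector is a
fort: if \<open>x\<^sub>u = 0\<close> and \<open>x\<^sub>v = 1\<close> for a neighbour \<open>v\<close> of \<open>u\<close>, then
\<open>u\<close> must have a further neighbour in the support. Hence feasible solutions avoiding \<open>C\<close>
are the indicator vectors of forts avoiding \<open>C\<close>, and an optimal one is a minimum such fort.
Finally, a fort avoiding \<open>C\<close> avoids all of \<open>cl(C)\<close>, since a vertex outside a fort can never
force a vertex of the fort: it would have exactly one neighbour in the fort.\<close>

lemma nbhd_subset: "nbhd V E u \<subseteq> V"
  by (auto simp: nbhd_def)

lemma nbhd_sym:
  assumes "simple_graph V E"
  shows "u \<in> nbhd V E v \<longleftrightarrow> v \<in> nbhd V E u"
  using assms by (auto simp: simple_graph_def nbhd_def)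

lemma sum_zero_one_eq_card:
  assumes "finite S" and "\<forall>w\<in>S. x w \<in> {0, 1::int}"
  shows "(\<Sum>w\<in>S. x w) = int (card {w\<in>S. x w = 1})"
proof -
  have "(\<Sum>w\<in>S. x w) = (\<Sum>w\<in>S. of_bool (x w = 1))"
    using assms(2) by (intro sum.cong) auto
  also have "\<dots> = int (card {w\<in>S. x w = 1})"
    using assms(1) by (simp add: Int_def)
  finally show ?thesis .
qed

lemma feasible_support_is_fort:
  assumes g: "simple_graph V E" and feas: "ip_feasible V E C x"
  shows "is_fort V E {v \<in> V. x v = 1}"
  unfolding is_fort_def
proof (intro conjI ballI)
  let ?F = "{v \<in> V. x v = 1}"
  have fin: "finite V" using g by (simp add: simple_graph_def)
  have x01: "\<forall>v\<in>V. x v \<in> {0, 1}" and sum_ge_1: "(\<Sum>v\<in>V. x v) \<ge> 1"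
    and cons: "\<forall>v \<in> V. \<forall>u \<in> nbhd V E v. x u - x v + (\<Sum>w\<in>nbhd V E u - {v}. x w) \<ge> 0"
    using feas by (auto simp: ip_feasible_def)
  show "?F \<noteq> {}"
    using sum_ge_1 sum_zero_one_eq_card[OF fin x01] by (metis card.empty of_nat_0 not_one_le_zero)
  show "?F \<subseteq> V" by blast
  fix u assume u: "u \<in> V - ?F"
  show "card (nbhd V E u \<inter> ?F) \<noteq> 1"
  proof
    assume "card (nbhd V E u \<inter> ?F) = 1"
    then obtain v where v: "nbhd V E u \<inter> ?F = {v}" by (rule card_1_singletonE)
    hence "v \<in> V" "x v = 1" "u \<in> nbhd V E v"
      using nbhd_sym[OF g] by auto
    hence "x u - x v + (\<Sum>w\<in>nbhd V E u - {v}. x w) \<ge> 0" using cons by blast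
    moreover have "x u = 0" using u x01 by auto
    moreover have "(\<Sum>w\<in>nbhd V E u - {v}. x w) = 0"
      using v x01 nbhd_subset[of V E u] by (intro sum.neutral) blast
    ultimately show False using \<open>x v = 1\<close> by simp
  qed
qed

lemma fort_indicator_feasible:
  assumes g: "simple_graph V E" and fort: "is_fort V E F" and disj: "F \<inter> C = {}"
  shows "ip_feasible V E C (\<lambda>v. of_bool (v \<in> F))"
proof -
  let ?x = "\<lambda>v. of_bool (v \<in> F) :: int"
  have fin: "finite V" using g by (simp add: simple_graph_def)
  have F: "F \<subseteq> V" "F \<noteq> {}" using fort by (auto simp: is_fort_def)
  have "finite F" using F(1) fin by (rule finite_subset)
  have "(\<Sum>v\<in>V. ?x v) = int (card F)"
    using fin F(1) by (simp add: Int_absorb1)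
  also have "\<dots> \<ge> 1" using \<open>finite F\<close> F(2) by (simp add: Suc_le_eq card_gt_0_iff)
  finally have sum_ge_1: "(\<Sum>v\<in>V. ?x v) \<ge> 1" .
  have edge_constraint: "?x u - ?x v + (\<Sum>w\<in>nbhd V E u - {v}. ?x w) \<ge> 0"
    if "u \<in> nbhd V E v" for u v
  proof (cases "u \<notin> F \<and> v \<in> F")
    case False
    have "(\<Sum>w\<in>nbhd V E u - {v}. ?x w) \<ge> 0" by (rule sum_nonneg) simp
    thus ?thesis using False by auto
  next
    case True
    have "u \<in> V - F" using that True nbhd_subset[of V E v] by blast
    hence card_ne_1: "card (nbhd V E u \<inter> F) \<noteq> 1" using fort by (simp add: is_fort_def)
    have "v \<in> nbhd V E u \<inter> F" using that True nbhd_sym[OF g] by blast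
    moreover have "nbhd V E u \<inter> F \<noteq> {v}" using card_ne_1 by auto
    ultimately obtain w where w: "w \<in> nbhd V E u \<inter> F" "w \<noteq> v" by blast
    have "finite (nbhd V E u - {v})" using finite_subset[OF nbhd_subset fin] by blast
    hence "?x w \<le> (\<Sum>w\<in>nbhd V E u - {v}. ?x w)"
      using w by (intro member_le_sum) auto
    thus ?thesis using True w by simp
  qed
  show ?thesis unfolding ip_feasible_def
    using disj by (intro conjI ballI sum_ge_1 edge_constraint) auto
qed

lemma zf_closure_subset:
  assumes "C \<subseteq> V"
  shows "zf_closure V E C \<subseteq> V"
proof
  fix v assume "v \<in> zf_closure V E C"
  thus "v \<in> V"
  proof induction
    case (base v)
    thus ?case using assms by blast
  next
    case (force u v)
    show ?case using force.hyps(2) nbhd_subset[of V E u] by blast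
  qed
qed

lemma fort_disjoint_zf_closure:
  assumes fort: "is_fort V E F" and disj: "F \<inter> C = {}" and "C \<subseteq> V"
  shows "F \<inter> zf_closure V E C = {}"
proof -
  have "v \<notin> F" if "v \<in> zf_closure V E C" for v
    using that
  proof induction
    case (base v)
    thus ?case using disj by blast
  next
    case (force u v)
    have "u \<in> V" using force.hyps(1) zf_closure_subset[OF \<open>C \<subseteq> V\<close>] by blast
    hence "card (nbhd V E u \<inter> F) \<noteq> 1" using force.IH(1) fort by (simp add: is_fort_def)
    show ?case
    proof
      assume "v \<in> F"
      with force.hyps(2) force.IH(2) have "nbhd V E u \<inter> F = {v}" by auto
      thus False using \<open>card (nbhd V E u \<inter> F) \<noteq> 1\<close> by simp
    qed
  qed
  thus ?thesis by blast
qed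

theorem corollary5p4:
  fixes V :: "'a set" and E :: "'a \<Rightarrow> 'a \<Rightarrow> bool" and C :: "'a set" and x :: "'a \<Rightarrow> int"
  assumes "simple_graph V E"
    and "C \<subseteq> V"
    and "ip_optimal V E C x"
  shows "is_fort V E {v \<in> V. x v = 1}
       \<and> {v \<in> V. x v = 1} \<subseteq> V - zf_closure V E C
       \<and> (\<forall>F'. is_fort V E F' \<and> F' \<subseteq> V - zf_closure V E C
              \<longrightarrow> card {v \<in> V. x v = 1} \<le> card F')"
proof -
  let ?F = "{v \<in> V. x v = 1}"
  have feas: "ip_feasible V E C x"
    and opt: "\<And>y. ip_feasible V E C y \<Longrightarrow> (\<Sum>v\<in>V. x v) \<le> (\<Sum>v\<in>V. y v)"
    using assms(3) by (auto simp: ip_optimal_def)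
  have fin: "finite V" using assms(1) by (simp add: simple_graph_def)
  have sum_x: "(\<Sum>v\<in>V. x v) = int (card ?F)"
    using feas fin by (intro sum_zero_one_eq_card) (auto simp: ip_feasible_def)
  have fort: "is_fort V E ?F" using assms(1) feas by (rule feasible_support_is_fort)
  have "?F \<inter> C = {}" using feas by (auto simp: ip_feasible_def)
  hence "?F \<inter> zf_closure V E C = {}" by (rule fort_disjoint_zf_closure[OF fort _ assms(2)])
  hence avoids_closure: "?F \<subseteq> V - zf_closure V E C" by blast
  have "card ?F \<le> card F'" if F': "is_fort V E F'" "F' \<subseteq> V - zf_closure V E C" for F'
  proof -
    have "F' \<subseteq> V" "F' \<inter> C = {}" using F'(2) zf_closure.base[of _ C V E] by blast+
    hence "(\<Sum>v\<in>V. x v) \<le> (\<Sum>v\<in>V. of_bool (v \<in> F'))"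
      by (intro opt fort_indicator_feasible[OF assms(1) F'(1)])
    also have "\<dots> = int (card F')" using fin \<open>F' \<subseteq> V\<close> by (simp add: Int_absorb1)
    finally show ?thesis using sum_x by simp
  qed
  thus ?thesis using fort avoids_closure by blast
qed

end
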